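(* Assume $F$ is $K$-smooth with $\ell\in\mathrm{int}(K)$ and strongly $K$-convex with $\mu\in\mathrm{int}(K)$, let $e\in\mathrm{int}(K)$, $\gamma\in(0,1)$, and let $\{x^k\}$ be generated by Algorithm 5, assumed not to terminate ($d^k\neq0$ for all $k$). Let $L_{\max}:=\max_{c^*\in C_e}\langle c^*,\ell\rangle$, $t_{\min}:=\min\{\gamma/L_{\max},1\}$, $\mu_{\min}:=\min_{c^*\in C_e}\langle c^*,\mu\rangle$. Then: (i) $\{x^k\}$ converges to an efficient solution $x^*$ of $\min_K F(x)$; (ii) $\|x^{k+1}-x^*\|\le\sqrt{1-t_{\min}\mu_{\min}}\,\|x^k-x^*\|$ for all $k\ge0$.
   Context: $K\subset\mathbb{R}^m$ closed convex pointed cone with nonempty interior; $y\preceq_K y'$ iff $y'-y\in K$. $K^*=\{c:\langle c,y\rangle\ge0\ \forall y\in K\}$; $C_e:=\{c^*\in K^*:\langle c^*,e\rangle=1\}$. $F:\mathbb{R}^n\to\mathbb{R}^m$ differentiable with Jacobian $JF$. Strongly $K$-convex with $\mu$: $JF(x)(y-x)+\tfrac12\|y-x\|^2\mu\preceq_K F(y)-F(x)$ $\forall x,y$; $K$-smooth with $\ell$: $F(y)-F(x)\preceq_K JF(x)(y-x)+\tfrac12\|y-x\|^2\ell$ $\forall x,y$. Efficient: no $x$ with $F(x)\preceq_K F(x^* )$, $F(x)\neq F(x^* )$. Algorithm 5: given $x^0$, for $k=0,1,\dots$: $d^k:=\arg\min_{d}\max_{c^*\in C_e}\langle c^*,JF(x^k)d\rangle+\tfrac12\|d\|^2$;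 if $d^k=0$ stop; otherwise $t_k:=\max\{\gamma^j:j\in\mathbb{N},\ F(x^k+\gamma^jd^k)-F(x^k)\preceq_K\gamma^j(JF(x^k)d^k+\tfrac12\|d^k\|^2e)\}$ and $x^{k+1}:=x^k+t_kd^k$. *)

theory Defs
  imports "HOL-Analysis.Analysis"
begin

definition K_le :: "'b::real_vector set \<Rightarrow> 'b \<Rightarrow> 'b \<Rightarrow> bool" where
  "K_le K y y' \<longleftrightarrow> y' - y \<in> K"

definition dual_cone :: "'b::real_inner set \<Rightarrow> 'b set" where
  "dual_cone K = {c. \<forall>y\<in>K. 0 \<le> c \<bullet> y}"

definition Ce :: "'b::real_inner set \<Rightarrow> 'b \<Rightarrow> 'b set" where
  "Ce K e = {c \<in> dual_cone K. c \<bullet> e = 1}"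

definition proper_cone :: "'b::euclidean_space set \<Rightarrow> bool" where
  "proper_cone K \<longleftrightarrow> cone K \<and> convex K \<and> closed K \<and> K \<inter> uminus ` K = {0} \<and> interior K \<noteq> {}"

definition strongly_K_convex :: "'b::euclidean_space set \<Rightarrow> ('a::euclidean_space \<Rightarrow> 'b) \<Rightarrow> ('a \<Rightarrow> 'a \<Rightarrow> 'b) \<Rightarrow> 'b \<Rightarrow> bool" where
  "strongly_K_convex K F J \<mu> \<longleftrightarrow>
     (\<forall>x y. K_le K (J x (y - x) + (1/2 * (norm (y - x))\<^sup>2) *\<^sub>R \<mu>) (F y - F x))"

definition K_smooth :: "'b::euclidean_space set \<Rightarrow> ('a::euclidean_space \<Rightarrow> 'b) \<Rightarrow> ('a \<Rightarrow> 'a \<Rightarrow> 'b) \<Rightarrow> 'b \<Rightarrow> bool" where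
  "K_smooth K F J l \<longleftrightarrow>
     (\<forall>x y. K_le K (F y - F x) (J x (y - x) + (1/2 * (norm (y - x))\<^sup>2) *\<^sub>R l))"

definition K_efficient :: "'b::euclidean_space set \<Rightarrow> ('a \<Rightarrow> 'b) \<Rightarrow> 'a \<Rightarrow> bool" where
  "K_efficient K F xs \<longleftrightarrow> \<not> (\<exists>x. K_le K (F x) (F xs) \<and> F x \<noteq> F xs)"

text \<open>Objective of the direction subproblem: max_{c \<in> C_e} <c, JF(x) d> + 1/2 |d|^2
  (the max is written as a supremum; C_e is compact and nonempty).\<close>
definition dir_obj :: "'b::euclidean_space set \<Rightarrow> 'b \<Rightarrow> ('a::euclidean_space \<Rightarrow> 'b) \<Rightarrow> 'a \<Rightarrow> real" where
  "dir_obj K e Jx d = (SUP c\<in>Ce K e. c \<bullet> Jx d) + 1/2 * (norm d)\<^sup>2"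

definition armijo_ok :: "'b::euclidean_space set \<Rightarrow> 'b \<Rightarrow> ('a::euclidean_space \<Rightarrow> 'b) \<Rightarrow> ('a \<Rightarrow> 'b) \<Rightarrow> real \<Rightarrow> 'a \<Rightarrow> 'a \<Rightarrow> nat \<Rightarrow> bool" where
  "armijo_ok K e F Jx \<gamma> x d j \<longleftrightarrow>
     K_le K (F (x + (\<gamma>^j) *\<^sub>R d) - F x) ((\<gamma>^j) *\<^sub>R (Jx d + (1/2 * (norm d)\<^sup>2) *\<^sub>R e))"

end

theory Submission
  imports Defs
begin

text \<open>
  The direction d at z minimises the sublinear scalarisation
  \<phi>(v) = max {\<langle>c, JF(z) v\<rangle> | c \<in> C_e} plus the proximal term |v|^2/2, so
  \<phi>(v) \<ge> \<phi>(d) - \<langle>d, v - d\<rangle> for all v, and \<phi>(d) = -|d|^2.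
  K-smoothness shows that every trial step t with t \<langle>c, l\<rangle> \<le> 1 on C_e passes the Armijo
  test, so backtracking stops at some t \<ge> t_min. For every y with F(y) \<preceq>_K F(z + t d),
  strong K-convexity between z and y, the Armijo test and the variational inequality at y - z
  give |z + t d - y|^2 \<le> (1 - t_min \<mu>_min) |z - y|^2. As F decreases along the iterates,
  this contraction applies to all later iterates and to all points below every iterate:
  the sequence is bounded, a subsequential limit lies below every iterate, the whole
  sequence converges to it, and any point dominating the limit coincides with it.
\<close>

lemma proper_cone_imp_convex_cone:
  assumes "proper_cone K" shows "convex_cone K"
  using assms unfolding proper_cone_def convex_cone_def conic_def cone_def by blast

lemma K_le_refl:
  assumes "convex_cone K" shows "K_le K a a"
  using convex_cone_contains_0[OF assms] unfolding K_le_def by simp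

lemma K_le_trans:
  assumes "convex_cone K" "K_le K a b" "K_le K b c" shows "K_le K a c"
proof -
  have "(c - b) + (b - a) \<in> K"
    using assms unfolding K_le_def by (blast intro: convex_cone_add)
  then show ?thesis unfolding K_le_def by simp
qed

lemma closed_convex_cone_separation:
  fixes K :: "'a::euclidean_space set"
  assumes "convex_cone K" "closed K" "z \<notin> K"
  shows "\<exists>a\<in>dual_cone K. a \<bullet> z < 0"
proof -
  have "convex K" using assms(1) by (simp add: convex_cone_def)
  with assms(2,3) obtain a b where ab: "a \<bullet> z < b" "\<forall>y\<in>K. b < a \<bullet> y"
    using separating_hyperplane_closed_point by blast
  have b0: "b < 0" using ab(2) convex_cone_contains_0[OF assms(1)] by auto
  have "0 \<le> a \<bullet> y" if y: "y \<in> K" for y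
  proof (rule ccontr)
    assume "\<not> 0 \<le> a \<bullet> y"
    then have neg: "a \<bullet> y < 0" by simp
    \<comment> \<open>scaling y onto the separating hyperplane contradicts strict separation\<close>
    have "(b / (a \<bullet> y)) *\<^sub>R y \<in> K"
      using neg b0 y by (intro convex_cone_scaleR[OF assms(1)]) (auto simp: divide_nonpos_neg)
    then have "b < a \<bullet> ((b / (a \<bullet> y)) *\<^sub>R y)" using ab(2) by blast
    with neg show False by simp
  qed
  then have "a \<in> dual_cone K" unfolding dual_cone_def by blast
  moreover have "a \<bullet> z < 0" using ab(1) b0 by linarith
  ultimately show ?thesis by blast
qed

lemma dual_cone_interior_bound:
  assumes "e \<in> interior K"
  obtains r where "r > 0" "\<And>c. c \<in> dual_cone K \<Longrightarrow> r * norm c \<le> c \<bullet> e"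
proof -
  obtain r where r: "r > 0" "cball e r \<subseteq> K" using assms mem_interior_cball by blast
  have "r * norm c \<le> c \<bullet> e" if c: "c \<in> dual_cone K" for c
  proof (cases "c = 0")
    case False
    let ?y = "e - (r / norm c) *\<^sub>R c"
    have "dist e ?y = r" using r(1) False by (simp add: dist_norm)
    then have "?y \<in> K" using r(2) by auto
    then have "0 \<le> c \<bullet> ?y" using c unfolding dual_cone_def by auto
    also have "c \<bullet> ?y = c \<bullet> e - r * norm c" using False
      by (simp add: inner_diff_right power2_norm_eq_inner[symmetric] power2_eq_square)
    finally show ?thesis by simp
  qed simp
  with r(1) that show thesis by blast
qed

lemma dual_cone_normalize_in_Ce:
  assumes "e \<in> interior K" "a \<in> dual_cone K" "a \<noteq> 0"
  shows "0 < a \<bullet> e" "(1 / (a \<bullet> e)) *\<^sub>R a \<in> Ce K e"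
proof -
  obtain r where "r > 0" "r * norm a \<le> a \<bullet> e" using dual_cone_interior_bound[OF assms(1)] assms(2) by blast
  moreover have "0 < r * norm a" using \<open>r > 0\<close> assms(3) by simp
  ultimately show pos: "0 < a \<bullet> e" by linarith
  show "(1 / (a \<bullet> e)) *\<^sub>R a \<in> Ce K e"
    using assms(2) pos unfolding Ce_def dual_cone_def by auto
qed

lemma mem_cone_iff_Ce:
  fixes K :: "'a::euclidean_space set"
  assumes "convex_cone K" "closed K" "e \<in> interior K"
  shows "z \<in> K \<longleftrightarrow> (\<forall>c\<in>Ce K e. 0 \<le> c \<bullet> z)"
proof
  assume "\<forall>c\<in>Ce K e. 0 \<le> c \<bullet> z"
  show "z \<in> K"
  proof (rule ccontr)
    assume "z \<notin> K"
    then obtain a where a: "a \<in> dual_cone K" "a \<bullet> z < 0"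
      using closed_convex_cone_separation assms(1,2) by blast
    then have "a \<noteq> 0" by auto
    note pos_c = dual_cone_normalize_in_Ce[OF assms(3) a(1) this]
    then have "0 \<le> a \<bullet> z / (a \<bullet> e)" using \<open>\<forall>c\<in>Ce K e. 0 \<le> c \<bullet> z\<close> by force
    with pos_c(1) a(2) show False by (simp add: zero_le_divide_iff)
  qed
qed (auto simp: Ce_def dual_cone_def)

lemma Ce_nonempty:
  assumes "proper_cone K" "e \<in> interior K" shows "Ce K e \<noteq> {}"
proof -
  obtain v :: 'a where v: "v \<in> Basis" using nonempty_Basis by blast
  have "v \<noteq> 0" using v by auto
  then have "v \<notin> K \<inter> uminus ` K" using assms(1) unfolding proper_cone_def by auto
  moreover have "v \<in> uminus ` K" if "- v \<in> K" by (rule image_eqI[of _ _ "- v"]) (use that in simp_all)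
  ultimately obtain z where "z \<notin> K" by blast
  moreover have "closed K" using assms(1) unfolding proper_cone_def by blast
  ultimately obtain a where "a \<in> dual_cone K" "a \<bullet> z < 0"
    using closed_convex_cone_separation[OF proper_cone_imp_convex_cone[OF assms(1)]] by blast
  then have "a \<noteq> 0" by auto
  then show ?thesis using dual_cone_normalize_in_Ce(2)[OF assms(2) \<open>a \<in> dual_cone K\<close>] by blast
qed

lemma bdd_above_Ce_inner:
  assumes "e \<in> interior K" shows "bdd_above ((\<lambda>c. c \<bullet> y) ` Ce K e)"
proof -
  obtain r where r: "r > 0" "\<And>c. c \<in> dual_cone K \<Longrightarrow> r * norm c \<le> c \<bullet> e"
    using dual_cone_interior_bound[OF assms] by blast
  have "c \<bullet> y \<le> norm y / r" if "c \<in> Ce K e" for c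
  proof -
    have "r * norm c \<le> 1" using r(2)[of c] that unfolding Ce_def by auto
    then have "norm c \<le> 1 / r" using r(1) by (simp add: field_simps)
    then have "norm c * norm y \<le> (1 / r) * norm y" by (rule mult_right_mono) simp
    then have "norm c * norm y \<le> norm y / r" by simp
    with order_trans[OF abs_ge_self Cauchy_Schwarz_ineq2] show ?thesis by (rule order_trans)
  qed
  then show ?thesis by (intro bdd_aboveI2) blast
qed

lemma Ce_inner_interior_pos:
  assumes "\<mu> \<in> interior K" "e \<in> interior K"
  obtains m where "m > 0" "\<And>c. c \<in> Ce K e \<Longrightarrow> m \<le> c \<bullet> \<mu>"
proof -
  obtain r where r: "r > 0" "\<And>c. c \<in> dual_cone K \<Longrightarrow> r * norm c \<le> c \<bullet> \<mu>"
    using dual_cone_interior_bound[OF assms(1)] by blast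
  have "r / (norm e + 1) \<le> c \<bullet> \<mu>" if c: "c \<in> Ce K e" for c
  proof -
    have "1 = c \<bullet> e" using c unfolding Ce_def by auto
    also have "\<dots> \<le> norm c * norm e" by (rule order_trans[OF abs_ge_self Cauchy_Schwarz_ineq2])
    also have "\<dots> \<le> norm c * (norm e + 1)" by (simp add: mult_left_mono)
    finally have "1 \<le> norm c * (norm e + 1)" .
    then have "r * 1 \<le> r * (norm c * (norm e + 1))" using r(1) by (intro mult_left_mono) auto
    then have "r / (norm e + 1) \<le> r * norm c" by (simp add: divide_le_eq add_pos_nonneg algebra_simps)
    also have "\<dots> \<le> c \<bullet> \<mu>" using r(2) c unfolding Ce_def by auto
    finally show ?thesis .
  qed
  moreover have "r / (norm e + 1) > 0" using r(1) by (simp add: add_nonneg_pos)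
  ultimately show thesis using that by blast
qed

definition Ce_sup :: "'b::real_inner set \<Rightarrow> 'b \<Rightarrow> 'b \<Rightarrow> real" where
  "Ce_sup K e y = (SUP c\<in>Ce K e. c \<bullet> y)"

lemma dir_obj_eq_Ce_sup: "dir_obj K e L d = Ce_sup K e (L d) + 1/2 * (norm d)\<^sup>2"
  unfolding dir_obj_def Ce_sup_def ..

lemma Ce_sup_upper:
  assumes "e \<in> interior K" "c \<in> Ce K e" shows "c \<bullet> y \<le> Ce_sup K e y"
  unfolding Ce_sup_def by (rule cSUP_upper[OF assms(2) bdd_above_Ce_inner[OF assms(1)]])

lemma Ce_sup_le_iff:
  assumes "proper_cone K" "e \<in> interior K"
  shows "Ce_sup K e y \<le> M \<longleftrightarrow> (\<forall>c\<in>Ce K e. c \<bullet> y \<le> M)"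
  unfolding Ce_sup_def by (rule cSUP_le_iff[OF Ce_nonempty[OF assms] bdd_above_Ce_inner[OF assms(2)]])

lemma K_le_iff_Ce_sup:
  assumes "proper_cone K" "e \<in> interior K"
  shows "K_le K a b \<longleftrightarrow> Ce_sup K e (a - b) \<le> 0"
proof -
  have "closed K" using assms(1) unfolding proper_cone_def by blast
  then have "K_le K a b \<longleftrightarrow> (\<forall>c\<in>Ce K e. 0 \<le> c \<bullet> (b - a))"
    unfolding K_le_def using mem_cone_iff_Ce[OF proper_cone_imp_convex_cone[OF assms(1)] _ assms(2)]
    by blast
  also have "\<dots> \<longleftrightarrow> Ce_sup K e (a - b) \<le> 0"
    unfolding Ce_sup_le_iff[OF assms] by (simp add: inner_diff_right)
  finally show ?thesis .
qed

lemma Ce_sup_zero: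
  assumes "proper_cone K" "e \<in> interior K" shows "Ce_sup K e 0 = 0"
  unfolding Ce_sup_def using Ce_nonempty[OF assms] by simp

lemma Ce_sup_add_le:
  assumes "proper_cone K" "e \<in> interior K"
  shows "Ce_sup K e (y + z) \<le> Ce_sup K e y + Ce_sup K e z"
  unfolding Ce_sup_le_iff[OF assms]
  using Ce_sup_upper[OF assms(2)] by (simp add: inner_add_right add_mono)

lemma Ce_sup_scaleR_le:
  assumes "proper_cone K" "e \<in> interior K" "0 \<le> s"
  shows "Ce_sup K e (s *\<^sub>R y) \<le> s * Ce_sup K e y"
  unfolding Ce_sup_le_iff[OF assms(1,2)]
  using Ce_sup_upper[OF assms(2)] assms(3) by (simp add: mult_left_mono)

lemma Ce_sup_add_scaleR_e:
  assumes "proper_cone K" "e \<in> interior K"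
  shows "Ce_sup K e (y + a *\<^sub>R e) \<le> Ce_sup K e y + a"
  unfolding Ce_sup_le_iff[OF assms]
  using Ce_sup_upper[OF assms(2)] by (simp add: inner_add_right Ce_def)

lemma convex_on_Ce_sup_linear:
  assumes "proper_cone K" "e \<in> interior K" "linear L"
  shows "convex_on UNIV (\<lambda>v. Ce_sup K e (L v))"
proof (rule convex_onI)
  fix t :: real and u v assume t: "0 < t" "t < 1"
  have "Ce_sup K e (L ((1 - t) *\<^sub>R u + t *\<^sub>R v)) = Ce_sup K e ((1 - t) *\<^sub>R L u + t *\<^sub>R L v)"
    using assms(3) by (simp add: linear_add linear_cmul)
  also have "\<dots> \<le> Ce_sup K e ((1 - t) *\<^sub>R L u) + Ce_sup K e (t *\<^sub>R L v)"
    by (rule Ce_sup_add_le[OF assms(1,2)])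
  also have "\<dots> \<le> (1 - t) * Ce_sup K e (L u) + t * Ce_sup K e (L v)"
    using t by (intro add_mono Ce_sup_scaleR_le[OF assms(1,2)]) auto
  finally show "Ce_sup K e (L ((1 - t) *\<^sub>R u + t *\<^sub>R v)) \<le> (1 - t) * Ce_sup K e (L u) + t * Ce_sup K e (L v)" .
qed simp

lemma convex_prox_variational_inequality:
  fixes g :: "'a::real_inner \<Rightarrow> real"
  assumes "convex_on UNIV g" and min: "\<And>d'. g d + 1/2 * (norm d)\<^sup>2 \<le> g d' + 1/2 * (norm d')\<^sup>2"
  shows "0 \<le> g v - g d + d \<bullet> (v - d)"
proof -
  define w where "w = v - d"
  have "- (s * (norm w)\<^sup>2 / 2) \<le> g v - g d + d \<bullet> w" if s: "0 < s" "s \<le> 1" for s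
  proof -
    have "d + s *\<^sub>R w = (1 - s) *\<^sub>R d + s *\<^sub>R v" unfolding w_def by (simp add: algebra_simps)
    then have "g (d + s *\<^sub>R w) \<le> (1 - s) * g d + s * g v"
      using convex_onD[OF assms(1)] s by simp
    moreover have "(norm (d + s *\<^sub>R w))\<^sup>2 = (norm d)\<^sup>2 + 2 * s * (d \<bullet> w) + s\<^sup>2 * (norm w)\<^sup>2"
      unfolding power2_norm_eq_inner
      by (simp add: inner_add_left inner_add_right inner_commute[of w d] power2_eq_square algebra_simps)
    ultimately have "0 \<le> s * (g v - g d + d \<bullet> w + s * (norm w)\<^sup>2 / 2)"
      using min[of "d + s *\<^sub>R w"] by (simp add: algebra_simps power2_eq_square)
    then show ?thesis using s by (simp add: zero_le_mult_iff)
  qed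
  then have "\<forall>\<^sub>F s in at_right 0. - (s * (norm w)\<^sup>2 / 2) \<le> g v - g d + d \<bullet> w"
    unfolding eventually_at_right_field by (intro exI[of _ 1]) auto
  moreover have "((\<lambda>s. - (s * (norm w)\<^sup>2 / 2)) \<longlongrightarrow> 0) (at_right 0)"
    by (auto intro!: tendsto_eq_intros)
  ultimately show ?thesis unfolding w_def
    using tendsto_upperbound[where F = "at_right (0::real)"] by fastforce
qed

text \<open>Comparing the minimiser d with the competitors 0 and 2d in the variational inequality.\<close>
lemma Ce_sup_steepest_direction:
  assumes "proper_cone K" "e \<in> interior K" "linear L"
    and min: "\<forall>d'. dir_obj K e L d \<le> dir_obj K e L d'"
  shows "Ce_sup K e (L d) = - (norm d)\<^sup>2"
proof -
  let ?g = "\<lambda>v. Ce_sup K e (L v)"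
  have vi: "0 \<le> ?g v - ?g d + d \<bullet> (v - d)" for v
    using convex_prox_variational_inequality[OF convex_on_Ce_sup_linear[OF assms(1-3)]] min
    unfolding dir_obj_eq_Ce_sup by blast
  have "?g 0 = 0" using Ce_sup_zero[OF assms(1,2)] linear_0[OF assms(3)] by simp
  then have "?g d \<le> - (norm d)\<^sup>2" using vi[of 0] by (simp add: power2_norm_eq_inner)
  moreover have "?g (2 *\<^sub>R d) \<le> 2 * ?g d"
    using Ce_sup_scaleR_le[OF assms(1,2)] linear_cmul[OF assms(3)] by simp
  then have "- (norm d)\<^sup>2 \<le> ?g d"
    using vi[of "2 *\<^sub>R d"] by (simp add: power2_norm_eq_inner algebra_simps)
  ultimately show ?thesis by linarith
qed

lemma K_le_Ce_inner:
  assumes "K_le K a b" "c \<in> Ce K e" shows "c \<bullet> a \<le> c \<bullet> b"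
  using assms unfolding K_le_def Ce_def dual_cone_def by (auto simp: inner_diff_right)

lemma strongly_convex_modulus_le_smooth:
  fixes F :: "'a::euclidean_space \<Rightarrow> 'b::euclidean_space"
  assumes "convex_cone K" "K_smooth K F J l" "strongly_K_convex K F J \<mu>"
  shows "K_le K \<mu> l"
proof -
  obtain v :: 'a where "v \<in> Basis" using nonempty_Basis by blast
  then have "v \<noteq> 0" by auto
  define h where "h = 1/2 * (norm v)\<^sup>2"
  have h: "h > 0" unfolding h_def using \<open>v \<noteq> 0\<close> by simp
  have "F v - F 0 - (J 0 v + h *\<^sub>R \<mu>) \<in> K" "J 0 v + h *\<^sub>R l - (F v - F 0) \<in> K"
    using assms(2,3) unfolding strongly_K_convex_def K_smooth_def K_le_def h_def
    by (metis diff_zero)+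
  then have "(F v - F 0 - (J 0 v + h *\<^sub>R \<mu>)) + (J 0 v + h *\<^sub>R l - (F v - F 0)) \<in> K"
    by (rule convex_cone_add[OF assms(1)])
  then have "h *\<^sub>R (l - \<mu>) \<in> K" by (simp add: algebra_simps)
  then have "(1 / h) *\<^sub>R (h *\<^sub>R (l - \<mu>)) \<in> K"
    using h by (intro convex_cone_scaleR[OF assms(1), of "1 / h"]) simp_all
  moreover have "(1 / h) *\<^sub>R (h *\<^sub>R (l - \<mu>)) = l - \<mu>" using h by simp
  ultimately show ?thesis unfolding K_le_def by simp
qed

lemma armijo_ok_if_small_step:
  assumes pc: "proper_cone K" and e: "e \<in> interior K" and smooth: "K_smooth K F J l"
    and lin: "linear (J z)" and "0 < \<gamma>" and small: "\<gamma> ^ j * Ce_sup K e l \<le> 1"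
  shows "armijo_ok K e F (J z) \<gamma> z d j"
proof -
  define s where "s = \<gamma> ^ j"
  have s: "0 < s" unfolding s_def using \<open>0 < \<gamma>\<close> by simp
  have "Ce_sup K e (s *\<^sub>R l + (-1) *\<^sub>R e) \<le> s * Ce_sup K e l - 1"
    using Ce_sup_add_scaleR_e[OF pc e, of "s *\<^sub>R l" "-1"] Ce_sup_scaleR_le[OF pc e, of s l] s
    by linarith
  then have "K_le K (s *\<^sub>R l) e"
    unfolding K_le_iff_Ce_sup[OF pc e] using small unfolding s_def by simp
  then have "(s * (norm d)\<^sup>2 / 2) *\<^sub>R (e - s *\<^sub>R l) \<in> K"
    unfolding K_le_def using s by (intro convex_cone_scaleR[OF proper_cone_imp_convex_cone[OF pc]]) auto
  \<comment> \<open>the gap between the Armijo bound and the smoothness bound at z + s d\<close>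
  moreover have "(s * (norm d)\<^sup>2 / 2) *\<^sub>R (e - s *\<^sub>R l) =
      s *\<^sub>R (J z d + (1/2 * (norm d)\<^sup>2) *\<^sub>R e) - (J z (s *\<^sub>R d) + (1/2 * (norm (s *\<^sub>R d))\<^sup>2) *\<^sub>R l)"
    using s lin by (simp add: linear_cmul power_mult_distrib scaleR_add_right scaleR_diff_right
        power2_eq_square algebra_simps)
  ultimately have "K_le K (J z (s *\<^sub>R d) + (1/2 * (norm (s *\<^sub>R d))\<^sup>2) *\<^sub>R l)
      (s *\<^sub>R (J z d + (1/2 * (norm d)\<^sup>2) *\<^sub>R e))"
    unfolding K_le_def by simp
  moreover have "K_le K (F (z + s *\<^sub>R d) - F z) (J z (s *\<^sub>R d) + (1/2 * (norm (s *\<^sub>R d))\<^sup>2) *\<^sub>R l)"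
    using smooth unfolding K_smooth_def by (metis add_diff_cancel_left')
  ultimately show ?thesis
    unfolding armijo_ok_def s_def
    using K_le_trans[OF proper_cone_imp_convex_cone[OF pc]] by blast
qed

lemma backtracking_Least:
  fixes \<gamma> L :: real
  assumes "0 < \<gamma>" "\<gamma> < 1" "0 < L" and suff: "\<And>j. \<gamma> ^ j * L \<le> 1 \<Longrightarrow> P j"
  shows "P (LEAST j. P j)" "min (\<gamma> / L) 1 \<le> \<gamma> ^ (LEAST j. P j)"
proof -
  obtain n where "\<gamma> ^ n < 1 / L" using real_arch_pow_inv[of "1 / L" \<gamma>] assms(1-3) by auto
  then have "P n" using assms(3) by (intro suff) (simp add: field_simps)
  then show "P (LEAST j. P j)" by (rule LeastI)
  show "min (\<gamma> / L) 1 \<le> \<gamma> ^ (LEAST j. P j)"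
  proof (cases "LEAST j. P j")
    case (Suc i)
    then have "\<not> P i" using not_less_Least[of i P] by simp
    then have "1 < \<gamma> ^ i * L" using suff by force
    then have "\<gamma> / L < \<gamma> * \<gamma> ^ i" using assms(1,3) by (simp add: field_simps)
    then show ?thesis using Suc by simp
  qed simp
qed

lemma armijo_condition_descent:
  assumes pc: "proper_cone K" and e: "e \<in> interior K" and lin: "linear L"
    and min: "\<forall>d'. dir_obj K e L d \<le> dir_obj K e L d'" and "0 \<le> t"
    and arm: "K_le K (F (z + t *\<^sub>R d) - F z) (t *\<^sub>R (L d + (1/2 * (norm d)\<^sup>2) *\<^sub>R e))"
  shows "K_le K (F (z + t *\<^sub>R d)) (F z)"
proof -
  have "Ce_sup K e (t *\<^sub>R (L d + (1/2 * (norm d)\<^sup>2) *\<^sub>R e)) \<le> t * Ce_sup K e (L d + (1/2 * (norm d)\<^sup>2) *\<^sub>R e)"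
    using Ce_sup_scaleR_le[OF pc e \<open>0 \<le> t\<close>] .
  also have "\<dots> \<le> t * (- (norm d)\<^sup>2 + 1/2 * (norm d)\<^sup>2)"
    using Ce_sup_add_scaleR_e[OF pc e, of "L d" "1/2 * (norm d)\<^sup>2"]
      Ce_sup_steepest_direction[OF pc e lin min] \<open>0 \<le> t\<close>
    by (intro mult_left_mono) auto
  also have "\<dots> \<le> 0" using \<open>0 \<le> t\<close> by (simp add: mult_nonneg_nonpos)
  finally have "K_le K (t *\<^sub>R (L d + (1/2 * (norm d)\<^sup>2) *\<^sub>R e)) 0"
    unfolding K_le_iff_Ce_sup[OF pc e] by simp
  with arm have "K_le K (F (z + t *\<^sub>R d) - F z) 0"
    by (rule K_le_trans[OF proper_cone_imp_convex_cone[OF pc]])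
  then show ?thesis unfolding K_le_def by simp
qed

text \<open>The variational inequality of the direction subproblem, tested at y - z, is combined with
  strong convexity between z and y, the Armijo condition and the dominance of y.\<close>
lemma armijo_condition_contraction:
  assumes pc: "proper_cone K" and e: "e \<in> interior K" and sconv: "strongly_K_convex K F J \<mu>"
    and lin: "linear (J z)" and min: "\<forall>d'. dir_obj K e (J z) d \<le> dir_obj K e (J z) d'"
    and "0 < t" and mu: "\<And>c. c \<in> Ce K e \<Longrightarrow> m \<le> c \<bullet> \<mu>"
    and arm: "K_le K (F (z + t *\<^sub>R d) - F z) (t *\<^sub>R (J z d + (1/2 * (norm d)\<^sup>2) *\<^sub>R e))"
    and y: "K_le K (F y) (F (z + t *\<^sub>R d))"
  shows "(norm (z + t *\<^sub>R d - y))\<^sup>2 \<le> (1 - t * m) * (norm (z - y))\<^sup>2"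
proof -
  let ?P = "\<lambda>v. Ce_sup K e (J z v)"
  define D where "D = (norm (z - y))\<^sup>2"
  define X where "X = d \<bullet> (z - y)"
  have Pd: "?P d = - (norm d)\<^sup>2" by (rule Ce_sup_steepest_direction[OF pc e lin min])
  have "0 \<le> ?P (y - z) - ?P d + d \<bullet> ((y - z) - d)"
    using convex_prox_variational_inequality[OF convex_on_Ce_sup_linear[OF pc e lin]] min
    unfolding dir_obj_eq_Ce_sup by blast
  then have X: "X \<le> ?P (y - z)"
    unfolding Pd X_def by (simp add: inner_diff_right power2_norm_eq_inner)
  have "?P (y - z) \<le> - t/2 * (norm d)\<^sup>2 - 1/2 * m * D"
    unfolding Ce_sup_le_iff[OF pc e]
  proof
    fix c assume c: "c \<in> Ce K e"
    have "K_le K (J z (y - z) + (1/2 * D) *\<^sub>R \<mu>) (F y - F z)"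
      using sconv unfolding strongly_K_convex_def D_def by (metis norm_minus_commute)
    then have s1: "c \<bullet> J z (y - z) + 1/2 * D * (c \<bullet> \<mu>) \<le> c \<bullet> F y - c \<bullet> F z"
      using K_le_Ce_inner[OF _ c] by (fastforce simp: inner_add_right inner_diff_right)
    have s2: "c \<bullet> F y \<le> c \<bullet> F (z + t *\<^sub>R d)" using K_le_Ce_inner[OF y c] .
    have "c \<bullet> J z d \<le> ?P d" by (rule Ce_sup_upper[OF e c])
    then have "t * (c \<bullet> J z d) \<le> t * - (norm d)\<^sup>2" using \<open>0 < t\<close> Pd by (intro mult_left_mono) auto
    then have "c \<bullet> (t *\<^sub>R (J z d + (1/2 * (norm d)\<^sup>2) *\<^sub>R e)) \<le> - t/2 * (norm d)\<^sup>2"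
      using c unfolding Ce_def by (simp add: inner_add_right algebra_simps)
    with K_le_Ce_inner[OF arm c]
    have s3: "c \<bullet> F (z + t *\<^sub>R d) - c \<bullet> F z \<le> - t/2 * (norm d)\<^sup>2"
      by (simp add: inner_diff_right)
    have "m * D \<le> (c \<bullet> \<mu>) * D" using mu[OF c] D_def by (simp add: mult_right_mono)
    with s1 s2 s3 show "c \<bullet> J z (y - z) \<le> - t/2 * (norm d)\<^sup>2 - 1/2 * m * D" by argo
  qed
  with X have "2 * t * X \<le> 2 * t * (- t/2 * (norm d)\<^sup>2 - 1/2 * m * D)"
    using \<open>0 < t\<close> by (intro mult_left_mono) auto
  moreover have "(norm (z + t *\<^sub>R d - y))\<^sup>2 = D + 2 * t * X + t\<^sup>2 * (norm d)\<^sup>2"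
  proof -
    have "z + t *\<^sub>R d - y = (z - y) + t *\<^sub>R d" by (simp add: algebra_simps)
    then show ?thesis unfolding D_def X_def power2_norm_eq_inner
      by (simp add: inner_add_left inner_add_right inner_diff_left inner_diff_right
          inner_commute[of z d] inner_commute[of y d] power2_eq_square algebra_simps)
  qed
  ultimately show ?thesis unfolding D_def[symmetric] by (simp add: power2_eq_square algebra_simps)
qed

lemma LIMSEQ_geometric_bound:
  fixes x :: "nat \<Rightarrow> 'a::real_normed_vector"
  assumes "0 \<le> s" "s < 1" "\<And>k. norm (x k - y) \<le> s ^ k * C"
  shows "x \<longlonglongrightarrow> y"
proof -
  have lim: "(\<lambda>k. s ^ k * C) \<longlonglongrightarrow> 0"
    using assms(1,2) by (intro tendsto_mult_left_zero LIMSEQ_power_zero) simp_all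
  have "(\<lambda>k. x k - y) \<longlonglongrightarrow> 0"
    by (rule Lim_null_comparison[OF _ lim]) (use assms(3) in simp)
  then show ?thesis by (simp add: LIM_zero_iff)
qed

lemma lower_set_contraction_converges:
  fixes x :: "nat \<Rightarrow> 'a::{real_normed_vector, heine_borel}"
  assumes refl: "\<And>a. R a a" and trans: "\<And>a b c. R a b \<Longrightarrow> R b c \<Longrightarrow> R a c"
    and closed: "\<And>z. closed {y. R y z}"
    and desc: "\<And>k. R (x (Suc k)) (x k)"
    and contr: "\<And>k y. R y (x (Suc k)) \<Longrightarrow> norm (x (Suc k) - y) \<le> s * norm (x k - y)"
    and s: "0 \<le> s" "s < 1"
  shows "\<exists>xs. x \<longlonglongrightarrow> xs \<and> (\<forall>k. R xs (x k)) \<and> (\<forall>y. R y xs \<longrightarrow> y = xs)"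
proof -
  have chain: "R (x m) (x k)" if "k \<le> m" for k m
    using that
  proof (induction m rule: dec_induct)
    case (step m)
    then show ?case using trans[OF desc[of m]] by blast
  qed (rule refl)
  have tendsto_lower: "x \<longlonglongrightarrow> y" if lower: "\<And>k. R y (x k)" for y
  proof (rule LIMSEQ_geometric_bound[OF s])
    show "norm (x k - y) \<le> s ^ k * norm (x 0 - y)" for k
    proof (induction k)
      case (Suc k)
      have "norm (x (Suc k) - y) \<le> s * norm (x k - y)" by (rule contr[OF lower])
      also have "\<dots> \<le> s * (s ^ k * norm (x 0 - y))" using Suc s by (intro mult_left_mono) auto
      finally show ?case by simp
    qed simp
  qed
  have "norm (x 0 - x m) \<le> norm (x 0 - x 1) / (1 - s)" for m
  proof (cases m)
    case (Suc i)
    then have "norm (x 1 - x m) \<le> s * norm (x 0 - x m)" using contr[of "x m" 0] chain[of 1 m] by simp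
    moreover have "norm (x 0 - x m) \<le> norm (x 0 - x 1) + norm (x 1 - x m)" using norm_triangle_ineq[of "x 0 - x 1" "x 1 - x m"] by simp
    ultimately have "(1 - s) * norm (x 0 - x m) \<le> norm (x 0 - x 1)" by (simp add: left_diff_distrib)
    then show ?thesis using s by (simp add: field_simps)
  qed (use s in simp)
  then have "range x \<subseteq> cball (x 0) (norm (x 0 - x 1) / (1 - s))" by (auto simp: dist_norm)
  then have "bounded (range x)" by (rule bounded_subset[OF bounded_cball])
  then obtain xs r where r: "strict_mono r" "(x \<circ> r) \<longlonglongrightarrow> xs"
    using bounded_imp_convergent_subsequence by blast
  have below: "R xs (x k)" for k
  proof -
    have "R (x (r n)) (x k)" if "k \<le> n" for n
      using seq_suble[OF r(1), of n] that by (intro chain) linarith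
    then have "\<forall>\<^sub>F n in sequentially. (x \<circ> r) n \<in> {y. R y (x k)}"
      unfolding eventually_sequentially by auto
    then show ?thesis using Lim_in_closed_set[OF closed _ _ r(2)] by simp
  qed
  have "y = xs" if "R y xs" for y
  proof -
    have "x \<longlonglongrightarrow> y" using trans[OF that below] by (rule tendsto_lower)
    then show ?thesis using LIMSEQ_unique[OF _ tendsto_lower[OF below]] by blast
  qed
  then show ?thesis using tendsto_lower[OF below] below by blast
qed

definition armijo_step :: "'b::euclidean_space set \<Rightarrow> 'b \<Rightarrow> ('a::euclidean_space \<Rightarrow> 'b) \<Rightarrow> ('a \<Rightarrow> 'b) \<Rightarrow> real \<Rightarrow> 'a \<Rightarrow> 'a \<Rightarrow> real" where
  "armijo_step K e F L \<gamma> z d = \<gamma> ^ (LEAST j. armijo_ok K e F L \<gamma> z d j)"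

lemma armijo_step_bounds:
  fixes z d :: "'a::euclidean_space"
  assumes "proper_cone K" "e \<in> interior K" "K_smooth K F J l" "linear (J z)"
    and "0 < \<gamma>" "\<gamma> < 1" "0 < Ce_sup K e l"
  defines "t \<equiv> armijo_step K e F (J z) \<gamma> z d"
  shows "K_le K (F (z + t *\<^sub>R d) - F z) (t *\<^sub>R (J z d + (1/2 * (norm d)\<^sup>2) *\<^sub>R e))"
    and "min (\<gamma> / Ce_sup K e l) 1 \<le> t" "0 < t"
proof -
  have small: "armijo_ok K e F (J z) \<gamma> z d j" if "\<gamma> ^ j * Ce_sup K e l \<le> 1" for j
    using that by (rule armijo_ok_if_small_step[OF assms(1-5)])
  have "armijo_ok K e F (J z) \<gamma> z d (LEAST j. armijo_ok K e F (J z) \<gamma> z d j)"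
    by (rule backtracking_Least(1)[OF assms(5-7)]) (rule small)
  then show "K_le K (F (z + t *\<^sub>R d) - F z) (t *\<^sub>R (J z d + (1/2 * (norm d)\<^sup>2) *\<^sub>R e))"
    unfolding t_def armijo_step_def armijo_ok_def .
  show "min (\<gamma> / Ce_sup K e l) 1 \<le> t"
    unfolding t_def armijo_step_def by (rule backtracking_Least(2)[OF assms(5-7)]) (rule small)
  show "0 < t" unfolding t_def armijo_step_def using assms(5) by simp
qed

lemma INF_Ce_inner_bounds:
  assumes "proper_cone K" "e \<in> interior K" "\<mu> \<in> interior K" "K_le K \<mu> l"
  shows "0 < (INF c\<in>Ce K e. c \<bullet> \<mu>)" "(INF c\<in>Ce K e. c \<bullet> \<mu>) \<le> Ce_sup K e l"
    and "\<And>c. c \<in> Ce K e \<Longrightarrow> (INF c\<in>Ce K e. c \<bullet> \<mu>) \<le> c \<bullet> \<mu>"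
proof -
  obtain m where m: "m > 0" "\<And>c. c \<in> Ce K e \<Longrightarrow> m \<le> c \<bullet> \<mu>"
    using Ce_inner_interior_pos[OF assms(3,2)] by blast
  show lower: "(INF c\<in>Ce K e. c \<bullet> \<mu>) \<le> c \<bullet> \<mu>" if "c \<in> Ce K e" for c
    using m(2) by (intro cINF_lower[OF bdd_belowI2 that]) blast
  have "m \<le> (INF c\<in>Ce K e. c \<bullet> \<mu>)" using m(2) by (intro cINF_greatest[OF Ce_nonempty[OF assms(1,2)]])
  then show "0 < (INF c\<in>Ce K e. c \<bullet> \<mu>)" using m(1) by linarith
  obtain c where c: "c \<in> Ce K e" using Ce_nonempty[OF assms(1,2)] by blast
  have "c \<bullet> \<mu> \<le> c \<bullet> l" by (rule K_le_Ce_inner[OF assms(4) c])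
  then show "(INF c\<in>Ce K e. c \<bullet> \<mu>) \<le> Ce_sup K e l"
    using lower[OF c] Ce_sup_upper[OF assms(2) c, of l] by linarith
qed

lemma armijo_step_contraction:
  assumes pc: "proper_cone K" and e: "e \<in> interior K" and smooth: "K_smooth K F J l"
    and sconv: "strongly_K_convex K F J \<mu>" and lin: "linear (J z)"
    and min: "\<forall>d'. dir_obj K e (J z) d \<le> dir_obj K e (J z) d'"
    and \<gamma>: "0 < \<gamma>" "\<gamma> < 1" and L: "0 < Ce_sup K e l"
    and m: "0 \<le> m" "\<And>c. c \<in> Ce K e \<Longrightarrow> m \<le> c \<bullet> \<mu>"
    and y: "K_le K (F y) (F (z + armijo_step K e F (J z) \<gamma> z d *\<^sub>R d))"
  shows "norm (z + armijo_step K e F (J z) \<gamma> z d *\<^sub>R d - y)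
           \<le> sqrt (1 - min (\<gamma> / Ce_sup K e l) 1 * m) * norm (z - y)"
proof -
  note t = armijo_step_bounds[OF pc e smooth lin \<gamma> L, of d]
  let ?t = "armijo_step K e F (J z) \<gamma> z d" and ?tmin = "min (\<gamma> / Ce_sup K e l) 1"
  have "(norm (z + ?t *\<^sub>R d - y))\<^sup>2 \<le> (1 - ?t * m) * (norm (z - y))\<^sup>2"
    by (rule armijo_condition_contraction[OF pc e sconv lin min t(3) m(2) t(1) y])
  also have "\<dots> \<le> (1 - ?tmin * m) * (norm (z - y))\<^sup>2"
    using t(2) m(1) by (intro mult_right_mono) (auto intro: mult_right_mono)
  finally have "sqrt ((norm (z + ?t *\<^sub>R d - y))\<^sup>2) \<le> sqrt ((1 - ?tmin * m) * (norm (z - y))\<^sup>2)"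
    by (rule real_sqrt_le_mono)
  then show ?thesis by (simp add: real_sqrt_mult)
qed

lemma closed_K_lower_set:
  fixes F :: "'a::topological_space \<Rightarrow> 'b::real_normed_vector"
  assumes "closed K" "continuous_on UNIV F"
  shows "closed {y. K_le K (F y) (F z)}"
proof -
  have "closed ((\<lambda>y. F z - F y) -` K)"
    using assms by (intro closed_vimage continuous_intros)
  then show ?thesis unfolding K_le_def vimage_def .
qed

theorem lemma5p1:
  fixes K :: "'b::euclidean_space set"
    and F :: "'a::euclidean_space \<Rightarrow> 'b"
    and J :: "'a \<Rightarrow> 'a \<Rightarrow> 'b"
    and l \<mu> e :: 'b
    and \<gamma> :: real
    and x d :: "nat \<Rightarrow> 'a"
  assumes K: "proper_cone K"
    and deriv: "\<And>z. (F has_derivative J z) (at z)"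
    and smooth: "K_smooth K F J l" and l_int: "l \<in> interior K"
    and sconv: "strongly_K_convex K F J \<mu>" and mu_int: "\<mu> \<in> interior K"
    and e_int: "e \<in> interior K"
    and gamma: "0 < \<gamma>" "\<gamma> < 1"
    and dir: "\<And>k. \<forall>d'. dir_obj K e (J (x k)) (d k) \<le> dir_obj K e (J (x k)) d'"
    and nonterm: "\<And>k. d k \<noteq> 0"
    and step: "\<And>k. x (Suc k) = x k +
                 (\<gamma> ^ (LEAST j. armijo_ok K e F (J (x k)) \<gamma> (x k) (d k) j)) *\<^sub>R d k"
  shows "\<exists>xs. x \<longlonglongrightarrow> xs \<and> K_efficient K F xs \<and>
           (let Lmax = (SUP c\<in>Ce K e. c \<bullet> l);
                tmin = min (\<gamma> / Lmax) 1;
                mumin = (INF c\<in>Ce K e. c \<bullet> \<mu>)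
            in \<forall>k. norm (x (Suc k) - xs) \<le> sqrt (1 - tmin * mumin) * norm (x k - xs))"
proof -
  define Lmax where "Lmax = Ce_sup K e l"
  define mumin where "mumin = (INF c\<in>Ce K e. c \<bullet> \<mu>)"
  define q where "q = 1 - min (\<gamma> / Lmax) 1 * mumin"
  define R where "R y z \<longleftrightarrow> K_le K (F y) (F z)" for y z
  have cone: "convex_cone K" by (rule proper_cone_imp_convex_cone[OF K])
  have lin: "linear (J z)" for z using deriv has_derivative_linear by blast
  note mumin = INF_Ce_inner_bounds[OF K e_int mu_int
      strongly_convex_modulus_le_smooth[OF cone smooth sconv], folded mumin_def Lmax_def]
  then have L: "0 < Ce_sup K e l" unfolding Lmax_def by linarith
  have "min (\<gamma> / Lmax) 1 * mumin \<le> (\<gamma> / Lmax) * Lmax"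
    using mumin(1,2) gamma by (intro mult_mono) auto
  then have q: "0 \<le> q" "q < 1" using mumin(1,2) gamma unfolding q_def by auto
  have x_Suc: "x (Suc k) = x k + armijo_step K e F (J (x k)) \<gamma> (x k) (d k) *\<^sub>R d k" for k
    using step unfolding armijo_step_def .
  have descent: "R (x (Suc k)) (x k)" for k
    using armijo_step_bounds[OF K e_int smooth lin gamma L] unfolding R_def x_Suc
    by (intro armijo_condition_descent[OF K e_int lin dir]) (auto intro: less_imp_le)
  have contraction: "norm (x (Suc k) - y) \<le> sqrt q * norm (x k - y)" if "R y (x (Suc k))" for k y
    using armijo_step_contraction[OF K e_int smooth sconv lin dir gamma L _ mumin(3)] that mumin(1)
    unfolding R_def x_Suc q_def Lmax_def by simp
  have "closed {y. R y z}" for z unfolding R_def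
    using K has_derivative_continuous[OF deriv] unfolding proper_cone_def
    by (intro closed_K_lower_set) (auto simp: continuous_on_eq_continuous_at)
  then obtain xs where "x \<longlonglongrightarrow> xs" "\<And>k. R xs (x k)" "\<And>y. R y xs \<Longrightarrow> y = xs"
    using lower_set_contraction_converges[of R x "sqrt q"] descent contraction q
      K_le_refl[OF cone] K_le_trans[OF cone]
    unfolding R_def by (auto simp: real_sqrt_lt_1_iff)
  then show ?thesis
    using contraction unfolding K_efficient_def R_def Let_def Lmax_def q_def mumin_def Ce_sup_def
    by blast
qed

end
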